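(* Let $(f^*,g^* )$ be a stationary $\hat\beta$-discounted Nash equilibrium of a two-player discrete time stochastic game for some $\hat\beta\in[0,1)$, and suppose: (C1) $(f^*,g^* )$ is pure, i.e. for each $s\in S$ there are actions $a^1_s\in A^1(s)$, $a^2_s\in A^2(s)$ with $f^*(s,a^1_s)=1$, $g^*(s,a^2_s)=1$; (C2) there exist $p_s\ge0$ ($s\in S$) with $\sum_{s\in S}p_s=1$ such that $P(f^*,g^* )_{ss'}=p_{s'}$ for all $s,s'\in S$ (every row of $P(f^*,g^* )$ equals $(p_1,\dots,p_{|S|})$); (C3) for all $s\in S$ and $a^1\in A^1(s)$: $\sum_{s'\in S}p_{s'}r^1(s',a^1_{s'},a^2_{s'})\ge\sum_{s'\in S}p(s'\mid s,a^1,a^2_s)\,r^1(s',a^1_{s'},a^2_{s'})$, and for all $s\in S$ and $a^2\in A^2(s)$: $\sum_{s'\in S}p_{s'}r^2(s',a^1_{s'},a^2_{s'})\ge\sum_{s'\in S}p(s'\mid s,a^1_s,a^2)\,r^2(s',a^1_{s'},a^2_{s'})$. Then $(f^*,g^* )$ is a Blackwell-Nash equilibrium.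
   Context: A two-player discrete time stochastic game consists of a finite state set $S$, finite nonempty action sets $A^1(s),A^2(s)$ for each $s\in S$, reward functions $r^i(s,a^1,a^2)$ for $i=1,2$, and transition probabilities $p(s'\mid s,a^1,a^2)$. A stationary strategy of player 1 is $f=(f(s))_{s\in S}$ with $f(s)$ a probability distribution on $A^1(s)$, $f(s,a^1)$ denoting the probability of $a^1$; similarly $g$ for player 2. For a stationary pair $(f,g)$ let $r^i(s,f,g)=\sum_{a^1,a^2}f(s,a^1)g(s,a^2)r^i(s,a^1,a^2)$ and $P(f,g)$ the $|S|\times|S|$ matrix with entries $P(f,g)_{ss'}=\sum_{a^1,a^2}f(s,a^1)g(s,a^2)p(s'\mid s,a^1,a^2)$. For $\beta\in[0,1)$ the $\beta$-discounted payoff vector of player $i$ is $v^i_\beta(f,g)=(I-\beta P(f,g))^{-1}r^i(f,g)$, with $s$-th component $v^i_\beta(s,f,g)$. A stationary pair $(f^*,g^* )$ is a $\beta$-discounted Nash equilibrium if for all $s\in S$, $v^1_\beta(s,f^*,g^* )\ge v^1_\beta(s,f,g^* )$ for all stationary $f$ and $v^2_\beta(s,f^*,g^* )\ge v^2_\beta(s,f^*,g)$ for all stationary $g$. A stationary pair is a Blackwell-Nash equilibrium (BNE) if there is $\beta_0\in[0,1)$ such that it is a $\beta$-discounted Nash equilibrium for every $\beta\in[\beta_0,1)$. *)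

theory Defs
  imports "HOL-Analysis.Analysis"
begin

definition stoch_game ::
  "('s::finite \<Rightarrow> 'a set) \<Rightarrow> ('s \<Rightarrow> 'b set) \<Rightarrow> ('s \<Rightarrow> 'a \<Rightarrow> 'b \<Rightarrow> 's \<Rightarrow> real) \<Rightarrow> bool" where
  "stoch_game A1 A2 p \<longleftrightarrow>
     (\<forall>s. finite (A1 s) \<and> A1 s \<noteq> {} \<and> finite (A2 s) \<and> A2 s \<noteq> {}) \<and>
     (\<forall>s a1 a2. a1 \<in> A1 s \<longrightarrow> a2 \<in> A2 s \<longrightarrow>
        (\<forall>s'. 0 \<le> p s a1 a2 s') \<and> (\<Sum>s'\<in>UNIV. p s a1 a2 s') = 1)"

definition stationary :: "('s \<Rightarrow> 'a set) \<Rightarrow> ('s \<Rightarrow> 'a \<Rightarrow> real) \<Rightarrow> bool" where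
  "stationary A f \<longleftrightarrow> (\<forall>s. (\<forall>a\<in>A s. 0 \<le> f s a) \<and> (\<Sum>a\<in>A s. f s a) = 1)"

definition rew_vec ::
  "('s::finite \<Rightarrow> 'a set) \<Rightarrow> ('s \<Rightarrow> 'b set) \<Rightarrow> ('s \<Rightarrow> 'a \<Rightarrow> 'b \<Rightarrow> real)
   \<Rightarrow> ('s \<Rightarrow> 'a \<Rightarrow> real) \<Rightarrow> ('s \<Rightarrow> 'b \<Rightarrow> real) \<Rightarrow> real^'s" where
  "rew_vec A1 A2 r f g = (\<chi> s. \<Sum>a1\<in>A1 s. \<Sum>a2\<in>A2 s. f s a1 * g s a2 * r s a1 a2)"

definition trans_mat ::
  "('s::finite \<Rightarrow> 'a set) \<Rightarrow> ('s \<Rightarrow> 'b set) \<Rightarrow> ('s \<Rightarrow> 'a \<Rightarrow> 'b \<Rightarrow> 's \<Rightarrow> real)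
   \<Rightarrow> ('s \<Rightarrow> 'a \<Rightarrow> real) \<Rightarrow> ('s \<Rightarrow> 'b \<Rightarrow> real) \<Rightarrow> real^'s^'s" where
  "trans_mat A1 A2 p f g = (\<chi> s s'. \<Sum>a1\<in>A1 s. \<Sum>a2\<in>A2 s. f s a1 * g s a2 * p s a1 a2 s')"

definition disc_payoff ::
  "real \<Rightarrow> ('s::finite \<Rightarrow> 'a set) \<Rightarrow> ('s \<Rightarrow> 'b set) \<Rightarrow> ('s \<Rightarrow> 'a \<Rightarrow> 'b \<Rightarrow> 's \<Rightarrow> real)
   \<Rightarrow> ('s \<Rightarrow> 'a \<Rightarrow> 'b \<Rightarrow> real) \<Rightarrow> ('s \<Rightarrow> 'a \<Rightarrow> real) \<Rightarrow> ('s \<Rightarrow> 'b \<Rightarrow> real) \<Rightarrow> real^'s" where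
  "disc_payoff \<beta> A1 A2 p r f g =
     matrix_inv (mat 1 - \<beta> *\<^sub>R trans_mat A1 A2 p f g) *v rew_vec A1 A2 r f g"

definition disc_nash ::
  "real \<Rightarrow> ('s::finite \<Rightarrow> 'a set) \<Rightarrow> ('s \<Rightarrow> 'b set) \<Rightarrow> ('s \<Rightarrow> 'a \<Rightarrow> 'b \<Rightarrow> 's \<Rightarrow> real)
   \<Rightarrow> ('s \<Rightarrow> 'a \<Rightarrow> 'b \<Rightarrow> real) \<Rightarrow> ('s \<Rightarrow> 'a \<Rightarrow> 'b \<Rightarrow> real)
   \<Rightarrow> ('s \<Rightarrow> 'a \<Rightarrow> real) \<Rightarrow> ('s \<Rightarrow> 'b \<Rightarrow> real) \<Rightarrow> bool" where
  "disc_nash \<beta> A1 A2 p r1 r2 f g \<longleftrightarrow>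
     (\<forall>s. (\<forall>f'. stationary A1 f' \<longrightarrow>
              disc_payoff \<beta> A1 A2 p r1 f' g $ s \<le> disc_payoff \<beta> A1 A2 p r1 f g $ s) \<and>
          (\<forall>g'. stationary A2 g' \<longrightarrow>
              disc_payoff \<beta> A1 A2 p r2 f g' $ s \<le> disc_payoff \<beta> A1 A2 p r2 f g $ s))"

definition blackwell_nash ::
  "('s::finite \<Rightarrow> 'a set) \<Rightarrow> ('s \<Rightarrow> 'b set) \<Rightarrow> ('s \<Rightarrow> 'a \<Rightarrow> 'b \<Rightarrow> 's \<Rightarrow> real)
   \<Rightarrow> ('s \<Rightarrow> 'a \<Rightarrow> 'b \<Rightarrow> real) \<Rightarrow> ('s \<Rightarrow> 'a \<Rightarrow> 'b \<Rightarrow> real)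
   \<Rightarrow> ('s \<Rightarrow> 'a \<Rightarrow> real) \<Rightarrow> ('s \<Rightarrow> 'b \<Rightarrow> real) \<Rightarrow> bool" where
  "blackwell_nash A1 A2 p r1 r2 f g \<longleftrightarrow>
     (\<exists>\<beta>0\<in>{0..<1}. \<forall>\<beta>\<in>{\<beta>0..<1}. disc_nash \<beta> A1 A2 p r1 r2 f g)"

end

theory Submission
  imports Defs
begin

text \<open>Against a pure opponent strategy each player faces a finite Markov decision process.
  For a pure policy whose transition rows all equal \<open>q\<close>, the \<open>\<beta>\<close>-discounted payoff is
  explicitly \<open>r + \<beta>/(1-\<beta>) \<langle>q, r\<rangle>\<close>, so the advantage (one-step Bellman gain) of any
  action is affine in \<open>\<beta>\<close>, with slope \<open>\<le> 0\<close> by (C3). Optimality at \<open>\<beta>h\<close> makes all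
  advantages nonpositive there, hence for every \<open>\<beta> \<ge> \<beta>h\<close>; and nonpositive advantages imply
  optimality by the minimum principle for \<open>I - \<beta>P\<close> with \<open>P\<close> stochastic.\<close>

definition stochastic_matrix :: "real^'n^'n \<Rightarrow> bool" where
  "stochastic_matrix P \<longleftrightarrow> (\<forall>i j. 0 \<le> P$i$j) \<and> (\<forall>i. (\<Sum>j\<in>UNIV. P$i$j) = 1)"

lemma discount_mult_vec_nth:
  fixes P :: "real^'n::finite^'n"
  shows "((mat 1 - \<beta> *\<^sub>R P) *v y) $ i = y$i - \<beta> * (\<Sum>j\<in>UNIV. P$i$j * y$j)"
proof -
  have "(mat 1 - \<beta> *\<^sub>R P) *v y = y - (\<beta> *\<^sub>R P) *v y"
    by (simp add: matrix_vector_mult_diff_rdistrib)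
  thus ?thesis by (simp add: matrix_vector_mult_def sum_distrib_left mult.assoc)
qed

text \<open>Minimum principle: at a minimising coordinate of \<open>y\<close> the averaging by \<open>P\<close>
  cannot decrease the value, so \<open>(1 - \<beta>) min y \<ge> 0\<close>.\<close>
lemma stochastic_discount_nonneg:
  fixes P :: "real^'n::finite^'n"
  assumes P: "stochastic_matrix P" and \<beta>: "0 \<le> \<beta>" "\<beta> < 1"
    and nonneg: "\<And>i. 0 \<le> ((mat 1 - \<beta> *\<^sub>R P) *v y)$i"
  shows "0 \<le> y$i"
proof -
  define m where "m = Min (range (\<lambda>j. y$j))"
  have "m \<in> range (\<lambda>j. y$j)"
    unfolding m_def by (rule Min_in) auto
  then obtain i0 where i0: "y$i0 = m" by auto
  have m_le: "m \<le> y$j" for j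
    unfolding m_def by (rule Min_le) auto
  have "m = (\<Sum>j\<in>UNIV. P$i0$j * m)"
    using P by (simp add: stochastic_matrix_def sum_distrib_right[symmetric])
  also have "\<dots> \<le> (\<Sum>j\<in>UNIV. P$i0$j * y$j)"
    using P m_le by (intro sum_mono mult_left_mono) (auto simp: stochastic_matrix_def)
  finally have "\<beta> * m \<le> \<beta> * (\<Sum>j\<in>UNIV. P$i0$j * y$j)"
    using \<beta>(1) by (rule mult_left_mono)
  also have "\<dots> \<le> m"
    using nonneg[of i0] i0 by (simp add: discount_mult_vec_nth)
  finally have "0 \<le> (1 - \<beta>) * m" by (simp add: algebra_simps)
  with \<beta>(2) have "0 \<le> m" by (simp add: zero_le_mult_iff)
  with m_le[of i] show ?thesis by linarith
qed

lemma stochastic_discount_le: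
  fixes P :: "real^'n::finite^'n"
  assumes P: "stochastic_matrix P" and \<beta>: "0 \<le> \<beta>" "\<beta> < 1"
    and nonneg: "\<And>i. 0 \<le> ((mat 1 - \<beta> *\<^sub>R P) *v y)$i"
  shows "((mat 1 - \<beta> *\<^sub>R P) *v y)$i \<le> y$i"
proof -
  have "0 \<le> (\<Sum>j\<in>UNIV. P$i$j * y$j)"
    using P stochastic_discount_nonneg[OF P \<beta> nonneg]
    by (intro sum_nonneg mult_nonneg_nonneg) (auto simp: stochastic_matrix_def)
  with \<beta>(1) show ?thesis by (simp add: discount_mult_vec_nth)
qed

lemma stochastic_discount_invertible:
  fixes P :: "real^'n::finite^'n"
  assumes P: "stochastic_matrix P" and \<beta>: "0 \<le> \<beta>" "\<beta> < 1"
  shows "invertible (mat 1 - \<beta> *\<^sub>R P)"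
proof -
  let ?M = "mat 1 - \<beta> *\<^sub>R P"
  have "x = y" if "?M *v x = ?M *v y" for x y
  proof -
    have xy: "?M *v (x - y) = 0" and yx: "?M *v (y - x) = 0"
      using that by (simp_all add: matrix_vector_mult_diff_distrib)
    have "0 \<le> (x - y)$i" "0 \<le> (y - x)$i" for i
      using stochastic_discount_nonneg[OF P \<beta>, of "x - y"]
        stochastic_discount_nonneg[OF P \<beta>, of "y - x"] by (simp_all add: xy yx)
    then show "x = y" by (simp add: vec_eq_iff) (meson antisym)
  qed
  then have "inj ((*v) ?M)" by (rule injI)
  then show ?thesis
    by (simp add: invertible_left_inverse matrix_left_invertible_injective)
qed

lemma matrix_inv_mult_vec:
  fixes M :: "'a::field^'n^'n"
  assumes "invertible M"
  shows "M *v (matrix_inv M *v r) = r" and "matrix_inv M *v (M *v x) = x"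
proof -
  have "M ** matrix_inv M = mat 1 \<and> matrix_inv M ** M = mat 1"
    using assms unfolding invertible_def matrix_inv_def by (rule someI_ex)
  then show "M *v (matrix_inv M *v r) = r" and "matrix_inv M *v (M *v x) = x"
    by (metis matrix_vector_mul_assoc matrix_vector_mul_lid)+
qed

lemma discount_const_rows_solution:
  fixes q :: "'n::finite \<Rightarrow> real"
  assumes q: "\<And>s. 0 \<le> q s" "(\<Sum>s\<in>UNIV. q s) = 1" and \<beta>: "0 \<le> \<beta>" "\<beta> < 1"
  shows "matrix_inv (mat 1 - \<beta> *\<^sub>R (\<chi> t s'. q s')) *v r
       = (\<chi> t. r$t + \<beta> / (1 - \<beta>) * (\<Sum>s'\<in>UNIV. q s' * r$s'))"
proof -
  define Q where "Q = (\<Sum>s'\<in>UNIV. q s' * r$s')"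
  define c where "c = \<beta> / (1 - \<beta>)"
  let ?M = "mat 1 - \<beta> *\<^sub>R ((\<chi> t s'. q s') :: real^'n^'n)"
  have "stochastic_matrix ((\<chi> t s'. q s') :: real^'n^'n)"
    using q by (simp add: stochastic_matrix_def)
  then have inv: "invertible ?M" by (rule stochastic_discount_invertible[OF _ \<beta>])
  have sum_q: "(\<Sum>j\<in>UNIV. q j * (r$j + c * Q)) = Q + c * Q"
    using q(2) by (simp add: Q_def distrib_left sum.distrib sum_distrib_right[symmetric])
  have c: "c * (1 - \<beta>) = \<beta>" using \<beta> by (simp add: c_def)
  have "(?M *v (\<chi> t. r$t + c * Q))$i = r$i + c * Q - \<beta> * (Q + c * Q)" for i
    unfolding discount_mult_vec_nth sum_q[symmetric] by simp
  also have "r$i + c * Q - \<beta> * (Q + c * Q) = r$i + (c * (1 - \<beta>) - \<beta>) * Q" for i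
    by (simp add: algebra_simps)
  finally have "(?M *v (\<chi> t. r$t + c * Q))$i = r$i" for i using c by simp
  then have "?M *v (\<chi> t. r$t + c * Q) = r" by (simp add: vec_eq_iff)
  then show ?thesis
    using matrix_inv_mult_vec(2)[OF inv] unfolding Q_def c_def by metis
qed

lemma sum_point_mass:
  fixes h F :: "'x \<Rightarrow> real"
  assumes "finite A" "a0 \<in> A" "\<And>a. a \<in> A \<Longrightarrow> 0 \<le> h a" "sum h A = 1" "h a0 = 1"
  shows "(\<Sum>a\<in>A. h a * F a) = F a0"
proof -
  have "sum h (A - {a0}) = 0"
    using assms sum.remove[OF assms(1,2), of h] by linarith
  then have "\<forall>a\<in>A - {a0}. h a = 0"
    using assms by (subst (asm) sum_nonneg_eq_0_iff) auto
  then have "(\<Sum>a\<in>A - {a0}. h a * F a) = 0" by simp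
  then show ?thesis
    using assms by (simp add: sum.remove)
qed

definition policy_trans ::
  "('n::finite \<Rightarrow> 'x set) \<Rightarrow> ('n \<Rightarrow> 'x \<Rightarrow> 'n \<Rightarrow> real) \<Rightarrow> ('n \<Rightarrow> 'x \<Rightarrow> real) \<Rightarrow> real^'n^'n" where
  "policy_trans A pp h = (\<chi> t s'. \<Sum>a\<in>A t. h t a * pp t a s')"

definition policy_reward ::
  "('n::finite \<Rightarrow> 'x set) \<Rightarrow> ('n \<Rightarrow> 'x \<Rightarrow> real) \<Rightarrow> ('n \<Rightarrow> 'x \<Rightarrow> real) \<Rightarrow> real^'n" where
  "policy_reward A rw h = (\<chi> t. \<Sum>a\<in>A t. h t a * rw t a)"

definition policy_payoff ::
  "real \<Rightarrow> ('n::finite \<Rightarrow> 'x set) \<Rightarrow> ('n \<Rightarrow> 'x \<Rightarrow> 'n \<Rightarrow> real) \<Rightarrow> ('n \<Rightarrow> 'x \<Rightarrow> real)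
   \<Rightarrow> ('n \<Rightarrow> 'x \<Rightarrow> real) \<Rightarrow> real^'n" where
  "policy_payoff \<beta> A pp rw h =
     matrix_inv (mat 1 - \<beta> *\<^sub>R policy_trans A pp h) *v policy_reward A rw h"

definition advantage ::
  "real \<Rightarrow> ('n::finite \<Rightarrow> 'x \<Rightarrow> 'n \<Rightarrow> real) \<Rightarrow> ('n \<Rightarrow> 'x \<Rightarrow> real) \<Rightarrow> real^'n \<Rightarrow> 'n \<Rightarrow> 'x \<Rightarrow> real" where
  "advantage \<beta> pp rw w t a = rw t a + \<beta> * (\<Sum>s'\<in>UNIV. pp t a s' * w$s') - w$t"

definition pure_strategy :: "('n \<Rightarrow> 'x set) \<Rightarrow> ('n \<Rightarrow> 'x \<Rightarrow> real) \<Rightarrow> ('n \<Rightarrow> 'x) \<Rightarrow> bool" where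
  "pure_strategy A h az \<longleftrightarrow> stationary A h \<and> (\<forall>t. az t \<in> A t \<and> h t (az t) = 1)"

lemma pure_strategy_sum:
  assumes "finite (A t)" "pure_strategy A h az"
  shows "(\<Sum>a\<in>A t. h t a * F a) = F (az t)"
  using assms by (intro sum_point_mass) (auto simp: pure_strategy_def stationary_def)

locale finite_mdp =
  fixes A :: "'n::finite \<Rightarrow> 'x set" and pp :: "'n \<Rightarrow> 'x \<Rightarrow> 'n \<Rightarrow> real"
  assumes finite_actions: "finite (A t)"
    and kernel_nonneg: "a \<in> A t \<Longrightarrow> 0 \<le> pp t a s'"
    and kernel_sum: "a \<in> A t \<Longrightarrow> (\<Sum>s'\<in>UNIV. pp t a s') = 1"
begin

lemma policy_trans_stochastic:
  assumes "stationary A h"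
  shows "stochastic_matrix (policy_trans A pp h)"
  unfolding stochastic_matrix_def
proof (intro conjI allI)
  fix i j
  show "0 \<le> policy_trans A pp h $ i $ j"
    using assms kernel_nonneg by (auto simp: policy_trans_def stationary_def intro!: sum_nonneg)
next
  fix i
  have "(\<Sum>j\<in>UNIV. \<Sum>a\<in>A i. h i a * pp i a j) = (\<Sum>a\<in>A i. h i a * (\<Sum>j\<in>UNIV. pp i a j))"
    by (simp add: sum.swap[of _ UNIV] sum_distrib_left)
  also have "\<dots> = 1"
    using assms kernel_sum by (simp add: stationary_def)
  finally show "(\<Sum>j\<in>UNIV. policy_trans A pp h $ i $ j) = 1"
    by (simp add: policy_trans_def)
qed

lemma policy_payoff_equation:
  assumes "stationary A h" "0 \<le> \<beta>" "\<beta> < 1"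
  shows "(mat 1 - \<beta> *\<^sub>R policy_trans A pp h) *v policy_payoff \<beta> A pp rw h = policy_reward A rw h"
  unfolding policy_payoff_def
  using assms policy_trans_stochastic stochastic_discount_invertible matrix_inv_mult_vec(1)
  by blast

lemma policy_residual:
  assumes "stationary A h"
  shows "(policy_reward A rw h - (mat 1 - \<beta> *\<^sub>R policy_trans A pp h) *v w) $ t
       = (\<Sum>a\<in>A t. h t a * advantage \<beta> pp rw w t a)"
proof -
  have h_sum: "(\<Sum>a\<in>A t. h t a) = 1" using assms by (simp add: stationary_def)
  have "(\<Sum>s'\<in>UNIV. policy_trans A pp h $ t $ s' * w$s')
      = (\<Sum>a\<in>A t. h t a * (\<Sum>s'\<in>UNIV. pp t a s' * w$s'))"
    by (simp add: policy_trans_def sum_distrib_right sum_distrib_left sum.swap[of _ UNIV] mult.assoc)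
  then have "(policy_reward A rw h - (mat 1 - \<beta> *\<^sub>R policy_trans A pp h) *v w) $ t
      = (\<Sum>a\<in>A t. h t a * rw t a) - (\<Sum>a\<in>A t. h t a) * w$t
        + \<beta> * (\<Sum>a\<in>A t. h t a * (\<Sum>s'\<in>UNIV. pp t a s' * w$s'))"
    by (simp add: discount_mult_vec_nth policy_reward_def h_sum)
  also have "\<dots> = (\<Sum>a\<in>A t. h t a * advantage \<beta> pp rw w t a)"
    by (simp add: advantage_def algebra_simps sum.distrib sum_subtractf sum_distrib_left
        sum_distrib_right)
  finally show ?thesis .
qed

lemma policy_payoff_le_if_advantage_nonpos:
  assumes h: "stationary A h" and \<beta>: "0 \<le> \<beta>" "\<beta> < 1"
    and adv: "\<And>t a. a \<in> A t \<Longrightarrow> advantage \<beta> pp rw w t a \<le> 0"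
  shows "policy_payoff \<beta> A pp rw h $ s \<le> w$s"
proof -
  let ?M = "mat 1 - \<beta> *\<^sub>R policy_trans A pp h"
  define y where "y = w - policy_payoff \<beta> A pp rw h"
  have "?M *v y = - (policy_reward A rw h - ?M *v w)"
    using policy_payoff_equation[OF h \<beta>] by (simp add: y_def matrix_vector_mult_diff_distrib)
  then have "(?M *v y)$t = - (\<Sum>a\<in>A t. h t a * advantage \<beta> pp rw w t a)" for t
    using policy_residual[OF h, of rw \<beta> w t] by simp
  moreover have "(\<Sum>a\<in>A t. h t a * advantage \<beta> pp rw w t a) \<le> 0" for t
    using h adv by (intro sum_nonpos mult_nonneg_nonpos) (auto simp: stationary_def)
  ultimately have "0 \<le> (?M *v y)$t" for t by simp
  then have "0 \<le> y$s"
    by (rule stochastic_discount_nonneg[OF policy_trans_stochastic[OF h] \<beta>])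
  then show ?thesis by (simp add: y_def)
qed

text \<open>If some action had positive advantage, switching to it at a single state would strictly
  raise the payoff there.\<close>
lemma advantage_nonpos_if_optimal:
  assumes hz: "stationary A hz" and \<beta>: "0 \<le> \<beta>" "\<beta> < 1"
    and opt: "\<And>h s. stationary A h \<Longrightarrow> policy_payoff \<beta> A pp rw h $ s \<le> policy_payoff \<beta> A pp rw hz $ s"
    and a: "a \<in> A t"
  shows "advantage \<beta> pp rw (policy_payoff \<beta> A pp rw hz) t a \<le> 0"
proof -
  define w where "w = policy_payoff \<beta> A pp rw hz"
  define h where "h = hz(t := (\<lambda>b. if b = a then 1 else 0))"
  define y where "y = policy_payoff \<beta> A pp rw h - w"
  let ?M = "mat 1 - \<beta> *\<^sub>R policy_trans A pp h"
  have h: "stationary A h"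
    using hz finite_actions[of t] a unfolding stationary_def h_def by auto
  have own: "(\<Sum>b\<in>A t'. hz t' b * advantage \<beta> pp rw w t' b) = 0" for t'
    using policy_residual[OF hz, of rw \<beta> w t'] policy_payoff_equation[OF hz \<beta>, of rw]
    by (simp add: w_def)
  have "(?M *v y)$t' = (\<Sum>b\<in>A t'. h t' b * advantage \<beta> pp rw w t' b)" for t'
    using policy_residual[OF h, of rw \<beta> w t'] policy_payoff_equation[OF h \<beta>, of rw]
    by (simp add: y_def matrix_vector_mult_diff_distrib)
  moreover have "(\<Sum>b\<in>A t. (if b = a then 1 else 0) * advantage \<beta> pp rw w t b)
      = advantage \<beta> pp rw w t a"
    using finite_actions[of t] a by (intro sum_point_mass) auto
  ultimately have My: "(?M *v y)$t' = (if t' = t then advantage \<beta> pp rw w t a else 0)" for t'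
    using own[of t'] by (simp add: h_def)
  show ?thesis
  proof (rule ccontr)
    assume "\<not> advantage \<beta> pp rw (policy_payoff \<beta> A pp rw hz) t a \<le> 0"
    then have pos: "0 < advantage \<beta> pp rw w t a" by (simp add: w_def)
    then have "0 \<le> (?M *v y)$t'" for t' by (simp add: My)
    then have "(?M *v y)$t \<le> y$t"
      by (rule stochastic_discount_le[OF policy_trans_stochastic[OF h] \<beta>])
    with pos My[of t] have "w$t < policy_payoff \<beta> A pp rw h $ t" by (simp add: y_def)
    with opt[OF h, of t] show False by (simp add: w_def)
  qed
qed

lemma policy_payoff_pure_const_rows:
  assumes pure: "pure_strategy A hz az" and rows: "\<And>t s'. pp t (az t) s' = q s'"
    and \<beta>: "0 \<le> \<beta>" "\<beta> < 1"
  shows "policy_payoff \<beta> A pp rw hz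
       = (\<chi> t. rw t (az t) + \<beta> / (1 - \<beta>) * (\<Sum>s'\<in>UNIV. q s' * rw s' (az s')))"
proof -
  have az: "az t \<in> A t" for t using pure by (simp add: pure_strategy_def)
  have q_row: "q = pp undefined (az undefined)" using rows by auto
  have q: "0 \<le> q s" "(\<Sum>s\<in>UNIV. q s) = 1" for s
    unfolding q_row by (simp_all add: kernel_nonneg[OF az] kernel_sum[OF az])
  have "policy_trans A pp hz = (\<chi> t s'. q s')" "policy_reward A rw hz = (\<chi> t. rw t (az t))"
    using pure_strategy_sum[OF finite_actions pure]
    by (simp_all add: policy_trans_def policy_reward_def rows)
  then show ?thesis
    using discount_const_rows_solution[OF q \<beta>] by (simp add: policy_payoff_def)
qed

lemma advantage_pure_const_rows:
  assumes pure: "pure_strategy A hz az" and rows: "\<And>t s'. pp t (az t) s' = q s'"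
    and \<beta>: "0 \<le> \<beta>" "\<beta> < 1" and a: "a \<in> A t"
  shows "advantage \<beta> pp rw (policy_payoff \<beta> A pp rw hz) t a
       = rw t a - rw t (az t)
         - \<beta> * ((\<Sum>s'\<in>UNIV. q s' * rw s' (az s')) - (\<Sum>s'\<in>UNIV. pp t a s' * rw s' (az s')))"
proof -
  define Q where "Q = (\<Sum>s'\<in>UNIV. q s' * rw s' (az s'))"
  define R where "R = (\<Sum>s'\<in>UNIV. pp t a s' * rw s' (az s'))"
  define c where "c = \<beta> / (1 - \<beta>)"
  have w: "policy_payoff \<beta> A pp rw hz $ s = rw s (az s) + c * Q" for s
    using policy_payoff_pure_const_rows[OF pure rows \<beta>] by (simp add: Q_def c_def)
  have "(\<Sum>s'\<in>UNIV. pp t a s' * (rw s' (az s') + c * Q)) = R + c * Q"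
    using kernel_sum[OF a]
    by (simp add: R_def distrib_left sum.distrib flip: sum_distrib_right)
  then have "advantage \<beta> pp rw (policy_payoff \<beta> A pp rw hz) t a
      = rw t a - rw t (az t) - \<beta> * (Q - R) + (\<beta> - c * (1 - \<beta>)) * Q"
    by (simp add: advantage_def w algebra_simps)
  also have "c * (1 - \<beta>) = \<beta>" using \<beta> by (simp add: c_def)
  finally show ?thesis by (simp add: Q_def R_def)
qed

lemma pure_policy_optimal_for_larger_discount:
  assumes pure: "pure_strategy A hz az" and rows: "\<And>t s'. pp t (az t) s' = q s'"
    and \<beta>h: "0 \<le> \<beta>h"
    and opt: "\<And>h s. stationary A h \<Longrightarrow> policy_payoff \<beta>h A pp rw h $ s \<le> policy_payoff \<beta>h A pp rw hz $ s"
    and dominant: "\<And>t a. a \<in> A t \<Longrightarrow>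
      (\<Sum>s'\<in>UNIV. pp t a s' * rw s' (az s')) \<le> (\<Sum>s'\<in>UNIV. q s' * rw s' (az s'))"
    and \<beta>: "\<beta>h \<le> \<beta>" "\<beta> < 1" and h: "stationary A h"
  shows "policy_payoff \<beta> A pp rw h $ s \<le> policy_payoff \<beta> A pp rw hz $ s"
proof (rule policy_payoff_le_if_advantage_nonpos[OF h])
  show \<beta>0: "0 \<le> \<beta>" "\<beta> < 1" using \<beta>h \<beta> by auto
  have hz: "stationary A hz" using pure by (simp add: pure_strategy_def)
  fix t a assume a: "a \<in> A t"
  define D where "D = (\<Sum>s'\<in>UNIV. q s' * rw s' (az s')) - (\<Sum>s'\<in>UNIV. pp t a s' * rw s' (az s'))"
  have "rw t a - rw t (az t) - \<beta>h * D \<le> 0"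
    using advantage_nonpos_if_optimal[OF hz _ _ opt a] advantage_pure_const_rows[OF pure rows _ _ a]
      \<beta>h \<beta> by (simp add: D_def)
  moreover have "\<beta>h * D \<le> \<beta> * D"
    using dominant[OF a] \<beta> by (intro mult_right_mono) (auto simp: D_def)
  ultimately show "advantage \<beta> pp rw (policy_payoff \<beta> A pp rw hz) t a \<le> 0"
    using advantage_pure_const_rows[OF pure rows \<beta>0 a] by (simp add: D_def)
qed

end

lemma trans_mat_rew_vec_pure_right:
  assumes fin: "\<And>t. finite (A2 t)" and g: "pure_strategy A2 g as2"
  shows "trans_mat A1 A2 p f g = policy_trans A1 (\<lambda>t a. p t a (as2 t)) f"
    and "rew_vec A1 A2 r f g = policy_reward A1 (\<lambda>t a. r t a (as2 t)) f"
proof -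
  have g_sum: "(\<Sum>b\<in>A2 t. f t a * g t b * F b) = f t a * F (as2 t)" for t a F
    using pure_strategy_sum[OF fin g, of t F] by (simp add: mult.assoc flip: sum_distrib_left)
  show "trans_mat A1 A2 p f g = policy_trans A1 (\<lambda>t a. p t a (as2 t)) f"
    and "rew_vec A1 A2 r f g = policy_reward A1 (\<lambda>t a. r t a (as2 t)) f"
    by (simp_all add: trans_mat_def policy_trans_def rew_vec_def policy_reward_def g_sum)
qed

lemma trans_mat_rew_vec_pure_left:
  assumes fin: "\<And>t. finite (A1 t)" and f: "pure_strategy A1 f as1"
  shows "trans_mat A1 A2 p f g = policy_trans A2 (\<lambda>t b. p t (as1 t) b) g"
    and "rew_vec A1 A2 r f g = policy_reward A2 (\<lambda>t b. r t (as1 t) b) g"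
proof -
  have f_sum: "(\<Sum>a\<in>A1 t. \<Sum>b\<in>A2 t. f t a * g t b * F a b) = (\<Sum>b\<in>A2 t. g t b * F (as1 t) b)"
    for t F
    using pure_strategy_sum[OF fin f, of t "\<lambda>a. \<Sum>b\<in>A2 t. g t b * F a b"]
    by (simp add: sum_distrib_left mult.assoc mult.left_commute)
  show "trans_mat A1 A2 p f g = policy_trans A2 (\<lambda>t b. p t (as1 t) b) g"
    and "rew_vec A1 A2 r f g = policy_reward A2 (\<lambda>t b. r t (as1 t) b) g"
    by (simp_all add: trans_mat_def policy_trans_def rew_vec_def policy_reward_def f_sum)
qed

lemma disc_payoff_pure_right:
  assumes "\<And>t. finite (A2 t)" "pure_strategy A2 g as2"
  shows "disc_payoff \<beta> A1 A2 p r f g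
       = policy_payoff \<beta> A1 (\<lambda>t a. p t a (as2 t)) (\<lambda>t a. r t a (as2 t)) f"
  by (simp add: disc_payoff_def policy_payoff_def trans_mat_rew_vec_pure_right[OF assms])

lemma disc_payoff_pure_left:
  assumes "\<And>t. finite (A1 t)" "pure_strategy A1 f as1"
  shows "disc_payoff \<beta> A1 A2 p r f g
       = policy_payoff \<beta> A2 (\<lambda>t b. p t (as1 t) b) (\<lambda>t b. r t (as1 t) b) g"
  by (simp add: disc_payoff_def policy_payoff_def trans_mat_rew_vec_pure_left[OF assms])

theorem theorem2:
  fixes A1 :: "'s::finite \<Rightarrow> 'a set" and A2 :: "'s \<Rightarrow> 'b set"
    and p :: "'s \<Rightarrow> 'a \<Rightarrow> 'b \<Rightarrow> 's \<Rightarrow> real"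
    and r1 r2 :: "'s \<Rightarrow> 'a \<Rightarrow> 'b \<Rightarrow> real"
    and f :: "'s \<Rightarrow> 'a \<Rightarrow> real" and g :: "'s \<Rightarrow> 'b \<Rightarrow> real"
    and \<beta>h :: real
    and as1 :: "'s \<Rightarrow> 'a" and as2 :: "'s \<Rightarrow> 'b"
    and q :: "'s \<Rightarrow> real"
  assumes game: "stoch_game A1 A2 p"
    and f_stat: "stationary A1 f" and g_stat: "stationary A2 g"
    and beta: "0 \<le> \<beta>h" "\<beta>h < 1"
    and nash: "disc_nash \<beta>h A1 A2 p r1 r2 f g"
    and C1: "\<forall>s. as1 s \<in> A1 s \<and> as2 s \<in> A2 s \<and> f s (as1 s) = 1 \<and> g s (as2 s) = 1"
    and C2: "\<forall>s. 0 \<le> q s" "(\<Sum>s\<in>UNIV. q s) = 1"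
      "\<forall>s s'. trans_mat A1 A2 p f g $ s $ s' = q s'"
    and C3a: "\<forall>s. \<forall>a1\<in>A1 s.
        (\<Sum>s'\<in>UNIV. p s a1 (as2 s) s' * r1 s' (as1 s') (as2 s'))
          \<le> (\<Sum>s'\<in>UNIV. q s' * r1 s' (as1 s') (as2 s'))"
    and C3b: "\<forall>s. \<forall>a2\<in>A2 s.
        (\<Sum>s'\<in>UNIV. p s (as1 s) a2 s' * r2 s' (as1 s') (as2 s'))
          \<le> (\<Sum>s'\<in>UNIV. q s' * r2 s' (as1 s') (as2 s'))"
  shows "blackwell_nash A1 A2 p r1 r2 f g"
proof -
  have fin1: "finite (A1 t)" and fin2: "finite (A2 t)" for t
    using game by (auto simp: stoch_game_def)
  have f: "pure_strategy A1 f as1" and g: "pure_strategy A2 g as2"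
    using f_stat g_stat C1 by (auto simp: pure_strategy_def)
  interpret P1: finite_mdp A1 "\<lambda>t a. p t a (as2 t)"
    using game C1 by unfold_locales (auto simp: stoch_game_def)
  interpret P2: finite_mdp A2 "\<lambda>t b. p t (as1 t) b"
    using game C1 by unfold_locales (auto simp: stoch_game_def)
  have rows: "p t (as1 t) (as2 t) s' = q s'" for t s'
    using C2(3) pure_strategy_sum[OF fin1 f]
    by (simp add: trans_mat_rew_vec_pure_right(1)[OF fin2 g] policy_trans_def)
  have opt1: "disc_payoff \<beta> A1 A2 p r1 f' g $ s \<le> disc_payoff \<beta> A1 A2 p r1 f g $ s"
    if "\<beta>h \<le> \<beta>" "\<beta> < 1" "stationary A1 f'" for \<beta> f' s
    unfolding disc_payoff_pure_right[OF fin2 g]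
    using nash C3a
    by (intro P1.pure_policy_optimal_for_larger_discount[OF f rows beta(1) _ _ that])
      (auto simp: disc_nash_def disc_payoff_pure_right[OF fin2 g])
  have opt2: "disc_payoff \<beta> A1 A2 p r2 f g' $ s \<le> disc_payoff \<beta> A1 A2 p r2 f g $ s"
    if "\<beta>h \<le> \<beta>" "\<beta> < 1" "stationary A2 g'" for \<beta> g' s
    unfolding disc_payoff_pure_left[OF fin1 f]
    using nash C3b
    by (intro P2.pure_policy_optimal_for_larger_discount[OF g rows beta(1) _ _ that])
      (auto simp: disc_nash_def disc_payoff_pure_left[OF fin1 f])
  have "disc_nash \<beta> A1 A2 p r1 r2 f g" if "\<beta>h \<le> \<beta>" "\<beta> < 1" for \<beta>
    unfolding disc_nash_def using opt1 opt2 that by blast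
  with beta show ?thesis
    unfolding blackwell_nash_def by (intro bexI[of _ \<beta>h]) auto
qed

end
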